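(* Let $\mathcal{I}=\{(i\mid A_i): i\in[m]\}$ be an index coding instance with $|A|_{\min}=\min_i|A_i|$, and let $\boldsymbol{G}\in\{0,1\}^{r\times m}$ be the binary matrix obtained at the end of any execution of the UMCD algorithm on $\mathcal{I}$, with row supports $G_j=\{i: g_{j,i}=1\}$. Then $\boldsymbol{G}$ satisfies the linear code condition with $d=|A|_{\min}+1$, i.e. $\bigl|\bigcup_{j\in K}G_j\bigr|\ge |A|_{\min}+|K|$ for every nonempty $K\subseteq[r]$.
   Context: $B_i=[m]\setminus(A_i\cup\{i\})$. For a $0/1$ matrix $\boldsymbol{G}$, $\boldsymbol{G}_{[k]}^{L}$ is the submatrix of the first $k$ rows and columns $L$; $\mathrm{mcm}(\boldsymbol{G})$ is the maximum number of $1$-entries no two in a common row or column (0 if no columns). UMCD algorithm: $N=[m]$, $k=0$; while $N\ne\emptyset$: $k\leftarrow k+1$; pick $w\in N$ with $|A_w|$ minimal over $N$ (arbitrary tie-breaking); set row $k$ of $\boldsymbol{G}$ to the indicator vector of $\{w\}\cup A_w$; remove $w$ from $N$; remove from $N$ every $i$ with $\mathrm{mcm}(\boldsymbol{G}_{[k]}^{\{i\}\cup B_i})=\mathrm{mcm}(\boldsymbol{G}_{[k]}^{B_i})+1$. The final matrix has $r$ rows, $r$ being the final value of $k$. *)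

theory Defs
  imports Main
begin

definition ic_instance :: "nat \<Rightarrow> (nat \<Rightarrow> nat set) \<Rightarrow> bool" where
  "ic_instance m A \<longleftrightarrow> (\<forall>i\<in>{1..m}. A i \<subseteq> {1..m} - {i})"

definition Bset :: "nat \<Rightarrow> (nat \<Rightarrow> nat set) \<Rightarrow> nat \<Rightarrow> nat set" where
  "Bset m A i = {1..m} - (A i \<union> {i})"

definition Amin :: "nat \<Rightarrow> (nat \<Rightarrow> nat set) \<Rightarrow> nat" where
  "Amin m A = Min ((\<lambda>i. card (A i)) ` {1..m})"

text \<open>A 0/1 matrix is represented by the list of its row supports:
  row j (1-based) has support G ! (j-1).  Entry (j,c) is 1 iff c \<in> G ! (j-1).\<close>

definition mcm :: "nat set list \<Rightarrow> nat set \<Rightarrow> nat" where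
  "mcm G L = Max {card M | M. M \<subseteq> {(j, c). j \<in> {1..length G} \<and> c \<in> L \<and> c \<in> G ! (j - 1)}
                              \<and> inj_on fst M \<and> inj_on snd M}"

inductive umcd_step :: "nat \<Rightarrow> (nat \<Rightarrow> nat set) \<Rightarrow> nat set \<times> nat set list \<Rightarrow> nat set \<times> nat set list \<Rightarrow> bool"
  for m A where
  "\<lbrakk> N \<noteq> {}; w \<in> N; \<forall>v\<in>N. card (A w) \<le> card (A v);
     G' = G @ [insert w (A w)];
     N' = {i \<in> N - {w}. \<not> (mcm G' (insert i (Bset m A i)) = mcm G' (Bset m A i) + 1)} \<rbrakk>
   \<Longrightarrow> umcd_step m A (N, G) (N', G')"

definition umcd_output :: "nat \<Rightarrow> (nat \<Rightarrow> nat set) \<Rightarrow> nat set list \<Rightarrow> bool" where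
  "umcd_output m A G \<longleftrightarrow> (umcd_step m A)\<^sup>*\<^sup>* ({1..m}, []) ({}, G)"

end

(*
  Along every run of UMCD two facts stay invariant: every nonempty set K of rows of G covers
  at least |A|min + |K| columns, and every i still in N has mcm(G, {i} \<union> B_i) = mcm(G, B_i).
  When w is picked, the appended row R = {w} \<union> A_w is disjoint from B_w = [m] - R.  Let K be
  rows of the old matrix G (n rows) with union U.  Outside {w} \<union> B_w there are only the
  |A_w| columns of A_w, so the deficiency version of Hall's theorem gives
  n \<le> mcm(G, {w} \<union> B_w) + |A_w| - |A|min, while a maximum matching into B_w uses at most
  |U \<inter> B_w| rows of K, so mcm(G, B_w) + |K| \<le> n + |U \<inter> B_w|.  Since w was still in N the
  two matching numbers agree, hence |R \<union> U| \<ge> |R| + |U \<inter> B_w| > |A|min + |K|.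
*)

theory Submission
  imports Defs
begin

lemma hall_condition_remove_element:
  assumes fin: "\<forall>x\<in>X. finite (S x)"
    and surplus: "\<forall>K\<subseteq>X. K \<noteq> {} \<longrightarrow> card K < card (\<Union>(S ` K))"
  shows "\<forall>K\<subseteq>X. card K \<le> card (\<Union>x\<in>K. S x - {y})"
proof (intro allI impI)
  fix K assume K: "K \<subseteq> X"
  show "card K \<le> card (\<Union>x\<in>K. S x - {y})"
  proof (cases "K \<noteq> {} \<and> finite K")
    case True
    then have "finite (\<Union>(S ` K))"
      using K fin by blast
    then have "card (\<Union>(S ` K)) \<le> card (\<Union>(S ` K) - {y}) + 1"
      by (cases "y \<in> \<Union>(S ` K)") (simp_all add: card_Diff_singleton)
    moreover have "card K < card (\<Union>(S ` K))"
      using surplus K True by simp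
    moreover have "(\<Union>x\<in>K. S x - {y}) = \<Union>(S ` K) - {y}"
      by blast
    ultimately show ?thesis
      by simp
  next
    case False
    then show ?thesis
      by auto
  qed
qed

lemma hall_condition_remove_critical:
  assumes "finite X" and fin: "\<forall>x\<in>X. finite (S x)"
    and hall: "\<forall>L\<subseteq>X. card L \<le> card (\<Union>(S ` L))"
    and "K \<subseteq> X" and critical: "card (\<Union>(S ` K)) \<le> card K"
  shows "\<forall>L\<subseteq>X - K. card L \<le> card (\<Union>x\<in>L. S x - \<Union>(S ` K))"
proof (intro allI impI)
  fix L assume L: "L \<subseteq> X - K"
  have fin_LK: "finite L" "finite K"
    using L \<open>K \<subseteq> X\<close> \<open>finite X\<close> finite_subset by blast+
  have fin_union: "finite (\<Union>(S ` (L \<union> K)))"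
    using L \<open>K \<subseteq> X\<close> fin fin_LK by auto
  have "card L + card K = card (L \<union> K)"
    using L fin_LK by (intro card_Un_disjoint[symmetric]) auto
  also have "\<dots> \<le> card (\<Union>(S ` (L \<union> K)))"
    using hall L \<open>K \<subseteq> X\<close> by (metis Diff_subset Un_subset_iff subset_trans)
  also have "\<dots> = card (\<Union>(S ` (L \<union> K)) - \<Union>(S ` K)) + card (\<Union>(S ` K))"
    using fin_union card_Diff_subset[of "\<Union>(S ` K)"] card_mono[OF fin_union, of "\<Union>(S ` K)"]
    by (simp add: finite_subset)
  also have "\<Union>(S ` (L \<union> K)) - \<Union>(S ` K) = (\<Union>x\<in>L. S x - \<Union>(S ` K))"
    by blast
  finally show "card L \<le> card (\<Union>x\<in>L. S x - \<Union>(S ` K))"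
    using critical by linarith
qed

lemma matching_extend:
  assumes "K \<subseteq> X" and g: "inj_on g K" "\<forall>x\<in>K. g x \<in> S x"
    and h: "inj_on h (X - K)" "\<forall>x\<in>X - K. h x \<in> S x - g ` K"
  shows "\<exists>f. inj_on f X \<and> (\<forall>x\<in>X. f x \<in> S x)"
proof -
  define f where "f x = (if x \<in> K then g x else h x)" for x
  have "h ` (X - K) \<subseteq> - g ` K"
    using h(2) by (simp add: image_subset_iff)
  then have "g ` K \<inter> h ` (X - K) = {}"
    by blast
  then have "inj_on f (K \<union> (X - K))"
    unfolding f_def using g(1) h(1) by (intro inj_on_disjoint_Un)
  then have "inj_on f X"
    using \<open>K \<subseteq> X\<close> by (simp add: Un_absorb1)
  moreover have "\<forall>x\<in>X. f x \<in> S x"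
    using g(2) h(2) by (simp add: f_def)
  ultimately show ?thesis
    by blast
qed

lemma matching_image_eq_if_critical:
  assumes "finite (\<Union>(S ` K))" and "inj_on g K" and "\<forall>x\<in>K. g x \<in> S x"
    and "card (\<Union>(S ` K)) \<le> card K"
  shows "g ` K = \<Union>(S ` K)"
proof (rule card_subset_eq)
  show "g ` K \<subseteq> \<Union>(S ` K)"
    using assms(3) by blast
  then have "card (g ` K) \<le> card (\<Union>(S ` K))"
    using assms(1) by (rule card_mono[rotated])
  then show "card (g ` K) = card (\<Union>(S ` K))"
    using assms(2,4) by (simp add: card_image)
qed fact

theorem hall_marriage:
  assumes "finite X" and "\<forall>x\<in>X. finite (S x)"
    and "\<forall>K\<subseteq>X. card K \<le> card (\<Union>(S ` K))"
  shows "\<exists>f. inj_on f X \<and> (\<forall>x\<in>X. f x \<in> S x)"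
  using assms
proof (induction "card X" arbitrary: X S rule: less_induct)
  case less
  note fin = less.prems(1,2) and hall = less.prems(3)
  have extend: "\<exists>f. inj_on f X \<and> (\<forall>x\<in>X. f x \<in> S x)"
    if K: "K \<subseteq> X" "K \<noteq> {}" and g: "inj_on g K" "\<forall>x\<in>K. g x \<in> S x"
      and hall_rest: "\<forall>L\<subseteq>X - K. card L \<le> card (\<Union>x\<in>L. S x - g ` K)"
    for K g
  proof -
    have "card (X - K) < card X"
      using K fin by (intro psubset_card_mono) auto
    moreover have "\<forall>x\<in>X - K. finite (S x - g ` K)"
      using fin by simp
    ultimately obtain h where "inj_on h (X - K)" "\<forall>x\<in>X - K. h x \<in> S x - g ` K"
      using less.hyps[of "X - K" "\<lambda>x. S x - g ` K"] fin(1) hall_rest by auto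
    then show ?thesis
      using matching_extend[OF K(1) g] by blast
  qed
  \<comment> \<open>Halmos--Vaughan: a proper critical subset splits the problem in two; otherwise every
    proper subset has surplus and an arbitrary edge can be committed.\<close>
  show ?case
  proof (cases "\<exists>K\<subseteq>X. K \<noteq> {} \<and> K \<noteq> X \<and> card (\<Union>(S ` K)) \<le> card K")
    case True
    then obtain K where K: "K \<subseteq> X" "K \<noteq> {}" "K \<noteq> X" and critical: "card (\<Union>(S ` K)) \<le> card K"
      by blast
    have "card K < card X"
      using K fin by (meson psubsetI psubset_card_mono)
    moreover have "\<forall>x\<in>K. finite (S x)" "\<forall>L\<subseteq>K. card L \<le> card (\<Union>(S ` L))"
      using K(1) fin hall by auto
    ultimately obtain g where g: "inj_on g K" "\<forall>x\<in>K. g x \<in> S x"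
      using less.hyps[of K S] K(1) fin(1) finite_subset by blast
    moreover have "finite (\<Union>(S ` K))"
      using K(1) fin finite_subset by blast
    ultimately have "g ` K = \<Union>(S ` K)"
      using critical by (intro matching_image_eq_if_critical)
    then show ?thesis
      using extend[OF K(1,2) g] hall_condition_remove_critical[OF fin hall K(1) critical] by simp
  next
    case no_critical: False
    show ?thesis
    proof (cases "X = {}")
      case False
      then obtain x where x: "x \<in> X"
        by blast
      have "card {x} \<le> card (S x)"
        using hall[rule_format, of "{x}"] x by simp
      then obtain y where y: "y \<in> S x"
        by fastforce
      have "card K < card (\<Union>(S ` K))" if "K \<subseteq> X - {x}" "K \<noteq> {}" for K
      proof -
        have "K \<subseteq> X" "K \<noteq> X"
          using that x by auto
        then show ?thesis
          using \<open>K \<noteq> {}\<close> no_critical by (meson not_le)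
      qed
      then have "\<forall>L\<subseteq>X - {x}. card L \<le> card (\<Union>z\<in>L. S z - {y})"
        using fin(2) by (intro hall_condition_remove_element) auto
      then show ?thesis
        using extend[of "{x}" "\<lambda>_. y"] x y by simp
    qed simp
  qed
qed

lemma hall_marriage_deficiency:
  fixes S :: "'a \<Rightarrow> 'b set"
  assumes "finite X" and fin: "\<forall>x\<in>X. finite (S x)"
    and hall: "\<forall>K\<subseteq>X. card K \<le> card (\<Union>(S ` K)) + d"
  shows "\<exists>Y f. Y \<subseteq> X \<and> inj_on f Y \<and> (\<forall>y\<in>Y. f y \<in> S y) \<and> card X \<le> card Y + d"
proof -
  \<comment> \<open>Give every \<open>x\<close> the same \<open>d\<close> extra dummy partners and apply Hall's theorem.\<close>
  define S' :: "'a \<Rightarrow> ('b + nat) set" where "S' x = Inl ` S x \<union> Inr ` {..<d}" for x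
  have "card K \<le> card (\<Union>(S' ` K))" if "K \<subseteq> X" for K
  proof (cases "K = {}")
    case False
    then have "\<Union>(S' ` K) = Inl ` \<Union>(S ` K) \<union> Inr ` {..<d}"
      unfolding S'_def by blast
    moreover have "finite (\<Union>(S ` K))"
      using that fin \<open>finite X\<close> finite_subset by blast
    ultimately have "card (\<Union>(S' ` K)) = card (\<Union>(S ` K)) + d"
      by (simp only:) (subst card_Un_disjoint, auto simp: card_image)
    then show ?thesis
      using hall that by simp
  qed simp
  moreover have "\<forall>x\<in>X. finite (S' x)"
    using fin unfolding S'_def by simp
  ultimately obtain f where f: "inj_on f X" "\<forall>x\<in>X. f x \<in> S' x"
    using hall_marriage[OF \<open>finite X\<close>] by blast
  define Y where "Y = {x \<in> X. f x \<in> range Inl}"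
  have "Y \<subseteq> X"
    unfolding Y_def by blast
  moreover have "inj_on (projl \<circ> f) Y"
    using f(1) unfolding Y_def by (auto simp: inj_on_def)
  moreover have "\<forall>y\<in>Y. (projl \<circ> f) y \<in> S y"
    using f(2) unfolding Y_def S'_def by auto
  moreover have "card X \<le> card Y + d"
  proof -
    have "f ` (X - Y) \<subseteq> Inr ` {..<d}"
      using f(2) unfolding Y_def S'_def by auto
    then have "card (f ` (X - Y)) \<le> card (Inr ` {..<d} :: ('b + nat) set)"
      by (intro card_mono) auto
    then have "card (f ` (X - Y)) \<le> d"
      by (simp add: card_image)
    moreover have "card (f ` (X - Y)) = card (X - Y)"
      using f(1) by (intro card_image) (auto intro: inj_on_subset)
    moreover have "card X = card (X \<inter> Y) + card (X - Y)"
      using \<open>finite X\<close> by (rule card_Int_Diff)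
    moreover have "X \<inter> Y = Y"
      using \<open>Y \<subseteq> X\<close> by blast
    ultimately show ?thesis
      by simp
  qed
  ultimately show ?thesis
    by blast
qed

definition one_entries :: "nat set list \<Rightarrow> nat set \<Rightarrow> (nat \<times> nat) set" where
  "one_entries G L = {(j, c). j \<in> {1..length G} \<and> c \<in> L \<and> c \<in> G ! (j - 1)}"

lemma mcm_eq_Max: "mcm G L = Max {card M | M. M \<subseteq> one_entries G L \<and> inj_on fst M \<and> inj_on snd M}"
  unfolding mcm_def one_entries_def ..

lemma finite_mcm_candidates:
  assumes "finite L"
  shows "finite {card M | M. M \<subseteq> one_entries G L \<and> inj_on fst M \<and> inj_on snd M}"
proof -
  have "one_entries G L \<subseteq> {1..length G} \<times> L"
    unfolding one_entries_def by blast
  then have "finite (Pow (one_entries G L))"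
    using assms finite_subset by blast
  then show ?thesis
    by (rule finite_subset[rotated, OF finite_imageI[of _ card]]) blast
qed

definition row_matching :: "nat set list \<Rightarrow> nat set \<Rightarrow> nat set \<Rightarrow> (nat \<Rightarrow> nat) \<Rightarrow> bool" where
  "row_matching G L J f \<longleftrightarrow>
     J \<subseteq> {1..length G} \<and> inj_on f J \<and> (\<forall>j\<in>J. f j \<in> L \<inter> G ! (j - 1))"

lemma row_matching_finite: "row_matching G L J f \<Longrightarrow> finite J"
  unfolding row_matching_def using finite_subset by blast

lemma card_le_mcm:
  assumes "finite L" and "row_matching G L J f"
  shows "card J \<le> mcm G L"
proof -
  define M where "M = (\<lambda>j. (j, f j)) ` J"
  have "card M = card J"
    unfolding M_def by (rule card_image) (auto intro: inj_onI)
  moreover have "M \<subseteq> one_entries G L"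
    using assms(2) unfolding M_def row_matching_def one_entries_def by auto
  moreover have "inj_on fst M"
    unfolding M_def by (auto intro: inj_onI)
  moreover have "inj_on snd M"
    using assms(2) unfolding M_def row_matching_def by (intro inj_on_imageI) (simp add: comp_def)
  ultimately have "card J \<in> {card M | M. M \<subseteq> one_entries G L \<and> inj_on fst M \<and> inj_on snd M}"
    by (intro CollectI exI[of _ M]) simp
  then show ?thesis
    unfolding mcm_eq_Max using finite_mcm_candidates[OF assms(1)] by (rule Max_ge[rotated])
qed

lemma ex_row_matching_card_mcm:
  assumes "finite L"
  shows "\<exists>J f. row_matching G L J f \<and> card J = mcm G L"
proof -
  have "card {} \<in> {card M | M. M \<subseteq> one_entries G L \<and> inj_on fst M \<and> inj_on snd M}"
    by (intro CollectI exI[of _ "{}"]) simp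
  then have "mcm G L \<in> {card M | M. M \<subseteq> one_entries G L \<and> inj_on fst M \<and> inj_on snd M}"
    unfolding mcm_eq_Max using finite_mcm_candidates[OF assms] by (intro Max_in) auto
  then obtain M where M: "M \<subseteq> one_entries G L" "inj_on fst M" "inj_on snd M" "card M = mcm G L"
    unfolding mem_Collect_eq by (elim exE conjE) simp
  define f where "f j = snd (the_inv_into M fst j)" for j
  have entry: "(j, f j) \<in> M" if "j \<in> fst ` M" for j
  proof -
    have "the_inv_into M fst j \<in> M" "fst (the_inv_into M fst j) = j"
      using M(2) that by (auto intro: the_inv_into_into f_the_inv_into_f)
    then show ?thesis
      unfolding f_def by (metis prod.collapse)
  qed
  have "row_matching G L (fst ` M) f"
    unfolding row_matching_def
  proof (intro conjI ballI)
    show "fst ` M \<subseteq> {1..length G}"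
      using M(1) unfolding one_entries_def by auto
    show "inj_on f (fst ` M)"
    proof (rule inj_onI)
      fix j j' assume "j \<in> fst ` M" "j' \<in> fst ` M" "f j = f j'"
      then show "j = j'"
        using inj_onD[OF M(3), of "(j, f j)" "(j', f j')"] entry[of j] entry[of j'] by simp
    qed
    show "f j \<in> L \<inter> G ! (j - 1)" if "j \<in> fst ` M" for j
      using entry[OF that] M(1) unfolding one_entries_def by auto
  qed
  moreover have "card (fst ` M) = mcm G L"
    using M(2,4) by (simp add: card_image)
  ultimately show ?thesis
    by blast
qed

lemma mcm_insert_le:
  assumes "finite L"
  shows "mcm G (insert i L) \<le> mcm G L + 1"
proof -
  obtain J f where J: "row_matching G (insert i L) J f" "card J = mcm G (insert i L)"
    using ex_row_matching_card_mcm assms by blast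
  define J' where "J' = {j \<in> J. f j \<noteq> i}"
  have "row_matching G L J' f"
    using J(1) unfolding row_matching_def J'_def by (auto intro: inj_on_subset)
  then have "card J' \<le> mcm G L"
    by (rule card_le_mcm[OF assms])
  moreover have "card (J - J') \<le> card {i}"
    using J(1) unfolding row_matching_def J'_def by (intro card_inj_on_le[of f]) (auto intro: inj_on_subset)
  moreover have "card J = card (J \<inter> J') + card (J - J')"
    using row_matching_finite[OF J(1)] by (rule card_Int_Diff)
  moreover have "J \<inter> J' = J'"
    unfolding J'_def by blast
  ultimately show ?thesis
    using J(2) by simp
qed

lemma mcm_add_card_le:
  assumes "finite L" and K: "K \<subseteq> {1..length G}"
  shows "mcm G L + card K \<le> length G + card ((\<Union>j\<in>K. G ! (j - 1)) \<inter> L)"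
proof -
  obtain J f where J: "row_matching G L J f" "card J = mcm G L"
    using ex_row_matching_card_mcm assms(1) by blast
  have "card (J \<inter> K) \<le> card ((\<Union>j\<in>K. G ! (j - 1)) \<inter> L)"
    using J(1) assms(1) unfolding row_matching_def by (intro card_inj_on_le[of f]) (auto intro: inj_on_subset)
  moreover have "card (J - K) \<le> card ({1..length G} - K)"
    using J(1) unfolding row_matching_def by (intro card_mono) auto
  moreover have "card ({1..length G} - K) + card K = length G"
    using K card_mono[OF finite_atLeastAtMost K] by (simp add: card_Diff_subset finite_subset)
  moreover have "card J = card (J \<inter> K) + card (J - K)"
    using row_matching_finite[OF J(1)] by (rule card_Int_Diff)
  ultimately show ?thesis
    using J(2) by linarith
qed

lemma length_le_mcm_add:
  assumes "finite L"
    and hall: "\<forall>K\<subseteq>{1..length G}. card K \<le> card ((\<Union>j\<in>K. G ! (j - 1)) \<inter> L) + d"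
  shows "length G \<le> mcm G L + d"
proof -
  have "(\<Union>j\<in>K. G ! (j - 1) \<inter> L) = (\<Union>j\<in>K. G ! (j - 1)) \<inter> L" for K
    by blast
  then have "\<forall>K\<subseteq>{1..length G}. card K \<le> card (\<Union>j\<in>K. G ! (j - 1) \<inter> L) + d"
    using hall by simp
  then obtain J f where J: "J \<subseteq> {1..length G}" "inj_on f J" "\<forall>j\<in>J. f j \<in> G ! (j - 1) \<inter> L"
    and "card {1..length G} \<le> card J + d"
    using hall_marriage_deficiency[of "{1..length G}" "\<lambda>j. G ! (j - 1) \<inter> L" d] assms(1) by auto
  moreover have "card J \<le> mcm G L"
    using J assms(1) by (intro card_le_mcm[of L G J f]) (auto simp: row_matching_def)
  ultimately show ?thesis
    by simp
qed

definition code_condition :: "nat \<Rightarrow> nat set list \<Rightarrow> bool" where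
  "code_condition a G \<longleftrightarrow>
     (\<forall>K. K \<subseteq> {1..length G} \<and> K \<noteq> {} \<longrightarrow> a + card K \<le> card (\<Union>j\<in>K. G ! (j - 1)))"

lemma UN_rows_subset:
  assumes "K \<subseteq> {1..length G}"
  shows "(\<Union>j\<in>K. G ! (j - 1)) \<subseteq> \<Union>(set G)"
proof -
  have "G ! (j - 1) \<in> set G" if "j \<in> K" for j
    using that assms by (intro nth_mem) force
  then show ?thesis
    by blast
qed

lemma code_condition_imp_length_le_mcm:
  assumes code: "code_condition a G" and rows: "\<Union>(set G) \<subseteq> C" and "finite C"
    and "D \<subseteq> C" and "a \<le> card (C - D)"
  shows "length G + a \<le> mcm G D + card (C - D)"
proof -
  have "card K \<le> card ((\<Union>j\<in>K. G ! (j - 1)) \<inter> D) + (card (C - D) - a)"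
    if K: "K \<subseteq> {1..length G}" for K
  proof (cases "K = {}")
    case False
    let ?V = "\<Union>j\<in>K. G ! (j - 1)"
    have "?V \<subseteq> (?V \<inter> D) \<union> (C - D)"
      using UN_rows_subset[OF K] rows by blast
    then have "card ?V \<le> card ((?V \<inter> D) \<union> (C - D))"
      using \<open>finite C\<close> \<open>D \<subseteq> C\<close> by (intro card_mono) (auto intro: finite_subset)
    also have "\<dots> \<le> card (?V \<inter> D) + card (C - D)"
      by (rule card_Un_le)
    moreover have "a + card K \<le> card ?V"
      using code K False unfolding code_condition_def by blast
    ultimately show ?thesis
      by linarith
  qed simp
  then have "length G \<le> mcm G D + (card (C - D) - a)"
    using \<open>finite C\<close> \<open>D \<subseteq> C\<close> finite_subset by (intro length_le_mcm_add) blast+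
  then show ?thesis
    using \<open>a \<le> card (C - D)\<close> by linarith
qed

lemma card_Un_new_row:
  assumes code: "code_condition a G" and rows: "\<Union>(set G) \<subseteq> C" and "finite C"
    and "R \<subseteq> C" and "w \<in> R" and "a < card R"
    and closed: "mcm G (insert w (C - R)) \<le> mcm G (C - R)"
    and K: "K \<subseteq> {1..length G}"
  shows "a + card K < card (R \<union> (\<Union>j\<in>K. G ! (j - 1)))"
proof -
  let ?U = "\<Union>j\<in>K. G ! (j - 1)"
  have fin_U: "finite ?U"
    using finite_subset[OF subset_trans[OF UN_rows_subset[OF K] rows] \<open>finite C\<close>] .
  have "mcm G (C - R) + card K \<le> length G + card (?U \<inter> (C - R))"
    using \<open>finite C\<close> K by (intro mcm_add_card_le) auto
  moreover have "C - insert w (C - R) = R - {w}"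
    using \<open>R \<subseteq> C\<close> \<open>w \<in> R\<close> by blast
  then have "card (C - insert w (C - R)) = card R - 1"
    using \<open>R \<subseteq> C\<close> \<open>w \<in> R\<close> \<open>finite C\<close> by (simp add: finite_subset)
  then have "length G + a \<le> mcm G (insert w (C - R)) + (card R - 1)"
    using code_condition_imp_length_le_mcm[OF code rows \<open>finite C\<close>, of "insert w (C - R)"]
      \<open>w \<in> R\<close> \<open>R \<subseteq> C\<close> \<open>a < card R\<close> by auto
  moreover have "card R + card (?U \<inter> (C - R)) = card (R \<union> (?U \<inter> (C - R)))"
    using \<open>R \<subseteq> C\<close> \<open>finite C\<close> fin_U by (intro card_Un_disjoint[symmetric]) (auto intro: finite_subset)
  moreover have "card (R \<union> (?U \<inter> (C - R))) \<le> card (R \<union> ?U)"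
    using \<open>R \<subseteq> C\<close> \<open>finite C\<close> fin_U by (intro card_mono) (auto intro: finite_subset)
  ultimately show ?thesis
    using closed \<open>a < card R\<close> by linarith
qed

lemma code_condition_snoc:
  assumes code: "code_condition a G" and rows: "\<Union>(set G) \<subseteq> C" and "finite C"
    and "R \<subseteq> C" and "w \<in> R" and "a < card R"
    and closed: "mcm G (insert w (C - R)) \<le> mcm G (C - R)"
  shows "code_condition a (G @ [R])"
  unfolding code_condition_def
proof (intro allI impI, elim conjE)
  fix K assume K: "K \<subseteq> {1..length (G @ [R])}" and "K \<noteq> {}"
  let ?n = "Suc (length G)"
  have "(G @ [R]) ! (j - 1) = G ! (j - 1)" if "j \<in> {1..length G}" for j
    using that by (auto simp: nth_append)
  then have old_rows: "(\<Union>j\<in>K'. (G @ [R]) ! (j - 1)) = (\<Union>j\<in>K'. G ! (j - 1))"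
    if "K' \<subseteq> {1..length G}" for K'
    using that by (intro SUP_cong) auto
  show "a + card K \<le> card (\<Union>j\<in>K. (G @ [R]) ! (j - 1))"
  proof (cases "?n \<in> K")
    case False
    then have "K \<subseteq> {1..length G}"
      using K by (auto simp: le_Suc_eq)
    then show ?thesis
      using code \<open>K \<noteq> {}\<close> old_rows unfolding code_condition_def by simp
  next
    case True
    define K' where "K' = K - {?n}"
    have K': "K' \<subseteq> {1..length G}" and K_eq: "K = insert ?n K'" and "?n \<notin> K'"
      using K True unfolding K'_def by (auto simp: le_Suc_eq)
    then have "(\<Union>j\<in>K. (G @ [R]) ! (j - 1)) = R \<union> (\<Union>j\<in>K'. G ! (j - 1))"
      using old_rows[OF K'] by simp
    moreover have "card K = Suc (card K')"
      using K_eq \<open>?n \<notin> K'\<close> K' finite_subset by (metis card_insert_disjoint finite_atLeastAtMost)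
    ultimately show ?thesis
      using card_Un_new_row[OF assms K'] by simp
  qed
qed

fun umcd_invariant :: "nat \<Rightarrow> (nat \<Rightarrow> nat set) \<Rightarrow> nat set \<times> nat set list \<Rightarrow> bool" where
  "umcd_invariant m A (N, G) \<longleftrightarrow>
     N \<subseteq> {1..m} \<and> \<Union>(set G) \<subseteq> {1..m} \<and> code_condition (Amin m A) G \<and>
     (\<forall>i\<in>N. mcm G (insert i (Bset m A i)) \<le> mcm G (Bset m A i))"

lemma umcd_invariant_init: "umcd_invariant m A ({1..m}, [])"
  using mcm_add_card_le[of _ "{}" "[]"] by (simp add: code_condition_def Bset_def)

lemma umcd_invariant_step:
  assumes "ic_instance m A" and "umcd_step m A s s'" and "umcd_invariant m A s"
  shows "umcd_invariant m A s'"
  using assms(2)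
proof cases
  case (1 N w G' G N')
  let ?R = "insert w (A w)"
  have inv: "N \<subseteq> {1..m}" "\<Union>(set G) \<subseteq> {1..m}" "code_condition (Amin m A) G"
    "\<forall>i\<in>N. mcm G (insert i (Bset m A i)) \<le> mcm G (Bset m A i)"
    using assms(3) 1 by auto
  have "w \<in> {1..m}"
    using 1 inv(1) by blast
  then have Aw: "A w \<subseteq> {1..m} - {w}"
    using assms(1) unfolding ic_instance_def by blast
  then have "card ?R = Suc (card (A w))"
    using finite_subset[OF Aw] by (intro card_insert_disjoint) auto
  moreover have "Amin m A \<le> card (A w)"
    unfolding Amin_def using \<open>w \<in> {1..m}\<close> by (intro Min_le) auto
  ultimately have "Amin m A < card ?R"
    by simp
  moreover have "Bset m A w = {1..m} - ?R"
    unfolding Bset_def by blast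
  ultimately have "code_condition (Amin m A) (G @ [?R])"
    using inv(2,3) inv(4)[rule_format, of w] Aw \<open>w \<in> {1..m}\<close> 1
    by (intro code_condition_snoc[where C = "{1..m}" and w = w]) auto
  moreover have "mcm G' (insert i (Bset m A i)) \<le> mcm G' (Bset m A i)" if "i \<in> N'" for i
  proof -
    have "mcm G' (insert i (Bset m A i)) \<noteq> mcm G' (Bset m A i) + 1"
      using that 1 by blast
    moreover have "mcm G' (insert i (Bset m A i)) \<le> mcm G' (Bset m A i) + 1"
      by (rule mcm_insert_le) (simp add: Bset_def)
    ultimately show ?thesis
      by linarith
  qed
  ultimately show ?thesis
    using 1 inv(1,2) \<open>w \<in> {1..m}\<close> Aw by auto
qed

theorem lemma3:
  fixes m :: nat and A :: "nat \<Rightarrow> nat set" and G :: "nat set list" and K :: "nat set"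
  assumes "ic_instance m A"
    and "umcd_output m A G"
    and "K \<subseteq> {1..length G}" and "K \<noteq> {}"
  shows "card (\<Union>j\<in>K. G ! (j - 1)) \<ge> Amin m A + card K"
proof -
  have "umcd_invariant m A ({}, G)"
    using assms(2) umcd_invariant_init unfolding umcd_output_def
    by (induction rule: rtranclp_induct) (auto intro: umcd_invariant_step[OF assms(1)])
  then show ?thesis
    using assms(3,4) by (simp add: code_condition_def)
qed

end
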